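(* Let $\Pi$ be a class of subsets of $[K]$ such that for every $k\in[K]$ there exist $A,B\in\Pi$ with $k\in A$ and $k\notin B$. Let $A\in\Pi$, $i\in A$, $j\notin A$. Suppose that for every $k\in[K]$ there are positive numbers $I_k,J_k$ with $$\mathrm P_k^1\Big(\limsup_{n\to\infty}\tfrac{\lambda_k(n)}{n}\le I_k\Big)=1,\qquad \mathrm P_k^0\Big(\limsup_{n\to\infty}\tfrac{-\lambda_k(n)}{n}\le J_k\Big)=1.$$ Then, as $\alpha,\beta\to0$, $$\mathcal L_{i,A}(\alpha,\beta,\Pi)\gtrsim\frac{|\log\alpha|}{\min\{I_{A,C}:C\in\Pi,\ i\notin C\}},\qquad \mathcal L_{j,A}(\alpha,\beta,\Pi)\gtrsim\frac{|\log\beta|}{\min\{I_{A,C}:C\in\Pi,\ j\in C\}},$$ where $I_{A,C}=\sum_{k\in A\setminus C}I_k+\sum_{k\in C\setminus A}J_k$.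
   Context: Let $K\ge1$, $[K]=\{1,\dots,K\}$, $\mathbb N=\{1,2,\dots\}$. There are $K$ independent data streams $X_k=\{X_k(n):n\in\mathbb N\}$; $\mathcal F_k(n)=\sigma(X_k(t):t\le n)$, $\mathcal F(n)=\sigma(\mathcal F_k(n):k\in[K])$. For each $k$, $\mathrm P_k^0,\mathrm P_k^1$ are distributions of $X_k$ mutually absolutely continuous on each $\mathcal F_k(n)$, and $\lambda_k(n)=\log\frac{d\mathrm P_k^1}{d\mathrm P_k^0}(\mathcal F_k(n))$. For $A\subseteq[K]$, $\mathrm P_A$ is the joint law with independent streams, $X_k\sim\mathrm P_k^1$ if $k\in A$ and $X_k\sim\mathrm P_k^0$ otherwise; $\mathrm E_A$ its expectation. A sequential multiple testing procedure $\chi=(\mathbf T,\mathbf D)$: each $T_k$ is an $\mathbb N$-valued stopping time w.r.t. $\{\mathcal F(n)\}$, each $D_k$ an $\mathcal F(T_k)$-measurable Bernoulli variable ($D_k=1$ means stream $k$ declared a signal). $\mathrm{FWE}^1_A(\chi)=\mathrm P_A(\exists j\notin A:D_j=1)$, $\mathrm{FWE}^2_A(\chi)=\mathrm P_A(\exists i\in A:D_i=0)$ (defined for procedures with $\mathrm P_A(T_k<\infty)=1$ for all $k$). $\Delta(\alpha,\beta,\Pi)$ is the set of procedures with $\mathrm{FWE}^1_A(\chi)\le\alpha$ and $\mathrm{FWE}^2_A(\chi)\le\beta$ for all $A\in\Pi$, and $\mathcal L_{k,A}(\alpha,\beta,\Pi)=\inf\{\mathrm E_A[T_k]:(\mathbf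 T,\mathbf D)\in\Delta(\alpha,\beta,\Pi)\}$. $x\gtrsim y$ means $\liminf x/y\ge1$. *)

theory Defs
  imports "HOL-Probability.Probability"
begin

text \<open>Streams are indexed by k in {1..K}; time by n in {1..} (the paper's N = {1,2,...}). A joint outcome is omega :: nat => nat => 'x, with omega k n = X_k(n).\<close>

definition seqsp :: "'x measure \<Rightarrow> (nat \<Rightarrow> 'x) measure" where
  "seqsp S = PiM {1..} (\<lambda>_. S)"

definition joint_space :: "nat \<Rightarrow> (nat \<Rightarrow> 'x measure) \<Rightarrow> (nat \<Rightarrow> nat \<Rightarrow> 'x) measure" where
  "joint_space K S = PiM {1..K} (\<lambda>k. seqsp (S k))"

text \<open>Law of (X(1),...,X(n)) under P, i.e. P restricted to F_k(n).\<close>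
definition marg :: "(nat \<Rightarrow> 'x) measure \<Rightarrow> 'x measure \<Rightarrow> nat \<Rightarrow> (nat \<Rightarrow> 'x) measure" where
  "marg P S n = distr P (PiM {1..n} (\<lambda>_. S)) (\<lambda>x. restrict x {1..n})"

definition llr :: "(nat \<Rightarrow> 'x) measure \<Rightarrow> (nat \<Rightarrow> 'x) measure \<Rightarrow> 'x measure \<Rightarrow> nat \<Rightarrow> (nat \<Rightarrow> 'x) \<Rightarrow> real" where
  "llr P0 P1 S n x = ln (enn2real (RN_deriv (marg P0 S n) (marg P1 S n) (restrict x {1..n})))"

definition joint_law :: "nat \<Rightarrow> (nat \<Rightarrow> (nat \<Rightarrow> 'x) measure) \<Rightarrow> (nat \<Rightarrow> (nat \<Rightarrow> 'x) measure)
    \<Rightarrow> nat set \<Rightarrow> (nat \<Rightarrow> nat \<Rightarrow> 'x) measure" where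
  "joint_law K P0 P1 A = PiM {1..K} (\<lambda>k. if k \<in> A then P1 k else P0 k)"

text \<open>F(n) = sigma(X_k(t) : t <= n, k in [K]).\<close>
definition filt :: "nat \<Rightarrow> (nat \<Rightarrow> 'x measure) \<Rightarrow> nat \<Rightarrow> (nat \<Rightarrow> nat \<Rightarrow> 'x) measure" where
  "filt K S n = vimage_algebra (space (joint_space K S))
     (\<lambda>\<omega>. \<lambda>k\<in>{1..K}. restrict (\<omega> k) {1..n}) (PiM {1..K} (\<lambda>k. PiM {1..n} (\<lambda>_. S k)))"

text \<open>Sequential multiple testing procedure (T, D): T k an {1,2,...} \<union> {\<infinity>}-valued stopping time
  w.r.t. F, D k an F(T k)-measurable Bernoulli variable (True = signal).\<close>
definition is_procedure :: "nat \<Rightarrow> (nat \<Rightarrow> 'x measure) \<Rightarrow> (nat \<Rightarrow> (nat \<Rightarrow> nat \<Rightarrow> 'x) \<Rightarrow> enat)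
    \<Rightarrow> (nat \<Rightarrow> (nat \<Rightarrow> nat \<Rightarrow> 'x) \<Rightarrow> bool) \<Rightarrow> bool" where
  "is_procedure K S T D \<longleftrightarrow> (\<forall>k\<in>{1..K}.
      (\<forall>\<omega>\<in>space (joint_space K S). 1 \<le> T k \<omega>) \<and>
      (\<forall>n. {\<omega>\<in>space (joint_space K S). T k \<omega> \<le> enat n} \<in> sets (filt K S n)) \<and>
      {\<omega>\<in>space (joint_space K S). D k \<omega>} \<in> sets (joint_space K S) \<and>
      (\<forall>n. {\<omega>\<in>space (joint_space K S). D k \<omega> \<and> T k \<omega> \<le> enat n} \<in> sets (filt K S n)))"

definition FWE1 :: "nat \<Rightarrow> (nat \<Rightarrow> (nat \<Rightarrow> 'x) measure) \<Rightarrow> (nat \<Rightarrow> (nat \<Rightarrow> 'x) measure)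
    \<Rightarrow> nat set \<Rightarrow> (nat \<Rightarrow> (nat \<Rightarrow> nat \<Rightarrow> 'x) \<Rightarrow> bool) \<Rightarrow> real" where
  "FWE1 K P0 P1 A D = measure (joint_law K P0 P1 A)
     {\<omega>\<in>space (joint_law K P0 P1 A). \<exists>j\<in>{1..K} - A. D j \<omega>}"

definition FWE2 :: "nat \<Rightarrow> (nat \<Rightarrow> (nat \<Rightarrow> 'x) measure) \<Rightarrow> (nat \<Rightarrow> (nat \<Rightarrow> 'x) measure)
    \<Rightarrow> nat set \<Rightarrow> (nat \<Rightarrow> (nat \<Rightarrow> nat \<Rightarrow> 'x) \<Rightarrow> bool) \<Rightarrow> real" where
  "FWE2 K P0 P1 A D = measure (joint_law K P0 P1 A)
     {\<omega>\<in>space (joint_law K P0 P1 A). \<exists>i\<in>A. \<not> D i \<omega>}"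

text \<open>Delta(alpha, beta, Pi); the FWEs are only defined when all T k are P_A-a.s. finite.\<close>
definition Delta :: "nat \<Rightarrow> (nat \<Rightarrow> 'x measure) \<Rightarrow> (nat \<Rightarrow> (nat \<Rightarrow> 'x) measure) \<Rightarrow> (nat \<Rightarrow> (nat \<Rightarrow> 'x) measure)
    \<Rightarrow> real \<Rightarrow> real \<Rightarrow> nat set set
    \<Rightarrow> ((nat \<Rightarrow> (nat \<Rightarrow> nat \<Rightarrow> 'x) \<Rightarrow> enat) \<times> (nat \<Rightarrow> (nat \<Rightarrow> nat \<Rightarrow> 'x) \<Rightarrow> bool)) set" where
  "Delta K S P0 P1 \<alpha> \<beta> Cls = {(T, D). is_procedure K S T D \<and>
     (\<forall>A\<in>Cls. (\<forall>k\<in>{1..K}. AE \<omega> in joint_law K P0 P1 A. T k \<omega> < \<infinity>) \<and>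
        FWE1 K P0 P1 A D \<le> \<alpha> \<and> FWE2 K P0 P1 A D \<le> \<beta>)}"

definition LL :: "nat \<Rightarrow> (nat \<Rightarrow> 'x measure) \<Rightarrow> (nat \<Rightarrow> (nat \<Rightarrow> 'x) measure) \<Rightarrow> (nat \<Rightarrow> (nat \<Rightarrow> 'x) measure)
    \<Rightarrow> nat \<Rightarrow> nat set \<Rightarrow> real \<Rightarrow> real \<Rightarrow> nat set set \<Rightarrow> ennreal" where
  "LL K S P0 P1 k A \<alpha> \<beta> Cls = (INF TD\<in>Delta K S P0 P1 \<alpha> \<beta> Cls.
      \<integral>\<^sup>+ \<omega>. ennreal_of_enat (fst TD k \<omega>) \<partial>(joint_law K P0 P1 A))"

definition IAC :: "(nat \<Rightarrow> real) \<Rightarrow> (nat \<Rightarrow> real) \<Rightarrow> nat set \<Rightarrow> nat set \<Rightarrow> real" where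
  "IAC I J A C = (\<Sum>k\<in>A - C. I k) + (\<Sum>k\<in>C - A. J k)"

end

theory Submission
  imports Defs
begin

(*
  Fix a procedure in Delta(alpha, beta, Pi) and an alternative C in Pi with i not in C. The
  decision on stream i is then a test of P_A against P_C: P_A(D_i = 0) <= beta and
  P_C(D_i = 1) <= alpha. Let lambda_{A,C} be the log-likelihood ratio of P_A against P_C, i.e.
  the sum of lambda_k over A - C minus the sum over C - A. Where D_i = 1, T_i = n and
  lambda_{A,C}(n) < c, changing measure from P_A to P_C loses at most a factor e^c; with
  c = (1 - eps/4)|log alpha| these events have total P_A-probability at most
  e^c alpha = alpha^(eps/4). Under P_A the ratio grows at most at rate I_{A,C}, so with the
  horizon N ~ (1 - eps/2)|log alpha| / I_{A,C} it reaches c before N only with vanishing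
  probability. Hence P_A(T_i <= N) -> 0, so E_A[T_i] >~ N, and taking the C that minimises
  I_{A,C} gives the first bound. The second bound is the same argument applied to the event
  D_j = 0 and the alternatives C containing j.
*)

section \<open>Growth of log-likelihood ratios\<close>

lemma limsup_sum_le:
  fixes u :: "'i \<Rightarrow> nat \<Rightarrow> ereal"
  assumes "finite A"
  shows "limsup (\<lambda>n. \<Sum>k\<in>A. u k n) \<le> (\<Sum>k\<in>A. limsup (u k))"
  using assms
proof (induction A rule: finite_induct)
  case empty
  then show ?case by (simp add: Limsup_const)
next
  case (insert a A)
  have "limsup (\<lambda>n. u a n + (\<Sum>k\<in>A. u k n)) \<le> limsup (u a) + limsup (\<lambda>n. \<Sum>k\<in>A. u k n)"
    by (rule ereal_limsup_add_mono)
  also have "\<dots> \<le> limsup (u a) + (\<Sum>k\<in>A. limsup (u k))"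
    using insert.IH by (rule add_left_mono)
  finally show ?case
    using insert by simp
qed

lemma limsup_less_imp_excess_bounded:
  fixes x :: "nat \<Rightarrow> real"
  assumes "limsup (\<lambda>n. ereal (x n / real n)) < ereal a"
  shows "\<exists>m::nat. \<forall>n. x n < a * real n + real m"
proof -
  have "eventually (\<lambda>n. x n / real n < a \<and> 0 < n) sequentially"
    using Limsup_lessD[OF assms] by (intro eventually_conj) auto
  then obtain n0 where "\<forall>n\<ge>n0. x n / real n < a \<and> 0 < n"
    by (auto simp: eventually_sequentially)
  then have n0: "x n < a * real n" if "n \<ge> n0" for n
    using that by (auto simp: pos_divide_less_eq)
  define B where "B = (\<Sum>n<n0. \<bar>x n\<bar> + \<bar>a\<bar> * real n)"
  have "x n < a * real n + real (nat \<lceil>B\<rceil> + 1)" for n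
  proof (cases "n < n0")
    case True
    have "x n - a * real n \<le> \<bar>x n\<bar> + \<bar>a\<bar> * real n"
      using abs_ge_self[of "x n"] abs_ge_minus_self[of "a * real n"] by (simp add: abs_mult)
    also have "\<dots> \<le> B"
      unfolding B_def using True by (intro member_le_sum) auto
    finally show ?thesis by linarith
  next
    case False
    then show ?thesis using n0[of n] by simp
  qed
  then show ?thesis by blast
qed

lemma measure_excess_bounded_tendsto_1:
  fixes L :: "nat \<Rightarrow> 'a \<Rightarrow> real"
  assumes "prob_space M" and [measurable]: "\<And>n. L n \<in> borel_measurable M"
    and rate: "AE \<omega> in M. limsup (\<lambda>n. ereal (L n \<omega> / real n)) \<le> ereal I" and "I < a"
  shows "(\<lambda>m. measure M {\<omega>\<in>space M. \<forall>n. L n \<omega> < a * real n + real m}) \<longlonglongrightarrow> 1"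
proof -
  interpret prob_space M by fact
  define B where "B m = {\<omega>\<in>space M. \<forall>n. L n \<omega> < a * real n + real m}" for m :: nat
  have B_sets [measurable]: "B m \<in> sets M" for m
    unfolding B_def by measurable
  have "incseq B"
    by (auto simp: incseq_def B_def) (meson add_left_mono less_le_trans of_nat_le_iff)
  have "AE \<omega> in M. \<exists>m. \<omega> \<in> B m"
    using rate AE_space
  proof eventually_elim
    case (elim \<omega>)
    then have "limsup (\<lambda>n. ereal (L n \<omega> / real n)) < ereal a"
      using \<open>I < a\<close> by (simp add: le_less_trans)
    from limsup_less_imp_excess_bounded[OF this]
    obtain m where "\<forall>n. L n \<omega> < a * real n + real m" ..
    then show ?case
      using elim by (auto simp: B_def)
  qed
  then have "prob (\<Union>m. B m) = 1"
    by (subst prob_eq_1) auto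
  moreover have "(\<lambda>m. prob (B m)) \<longlonglongrightarrow> prob (\<Union>m. B m)"
    by (rule finite_Lim_measure_incseq) (use \<open>incseq B\<close> in auto)
  ultimately show ?thesis
    by (simp add: B_def)
qed

lemma crossing_subset_excess_unbounded:
  fixes L :: "nat \<Rightarrow> 'a \<Rightarrow> real"
  assumes "0 \<le> a" and "real m \<le> (c - a) * real N"
  shows "{\<omega>\<in>\<Omega>. \<exists>n\<le>N. c * real N \<le> L n \<omega>} \<subseteq> \<Omega> - {\<omega>\<in>\<Omega>. \<forall>n. L n \<omega> < a * real n + real m}"
proof safe
  fix \<omega> n assume n: "n \<le> N" "c * real N \<le> L n \<omega>" and bound: "\<forall>n. L n \<omega> < a * real n + real m"
  have "a * real n \<le> a * real N"
    using n(1) assms(1) by (simp add: mult_left_mono)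
  moreover have "L n \<omega> < a * real n + real m"
    using bound by blast
  ultimately show False
    using n(2) assms(2) unfolding left_diff_distrib by linarith
qed

lemma measure_crossing_tendsto_0:
  fixes L :: "nat \<Rightarrow> 'a \<Rightarrow> real"
  assumes "prob_space M" and L [measurable]: "\<And>n. L n \<in> borel_measurable M"
    and rate: "AE \<omega> in M. limsup (\<lambda>n. ereal (L n \<omega> / real n)) \<le> ereal I"
    and "I < c" "0 < c"
  shows "(\<lambda>N. measure M {\<omega>\<in>space M. \<exists>n\<le>N. c * real N \<le> L n \<omega>}) \<longlonglongrightarrow> 0"
proof -
  interpret prob_space M by fact
  (* with I < a < c, almost surely L n \<omega> < a n + m for some m, and such an \<omega> cannot reach
     c N before time N once m \<le> (c - a) N *)
  define a where "a = (max I 0 + c) / 2"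
  have a: "I < a" "0 \<le> a" "a < c"
    using assms by (auto simp: a_def)
  define B where "B m = {\<omega>\<in>space M. \<forall>n. L n \<omega> < a * real n + real m}" for m :: nat
  have B_sets: "B m \<in> sets M" for m
    unfolding B_def by measurable
  have B_tendsto: "(\<lambda>m. prob (B m)) \<longlonglongrightarrow> 1"
    unfolding B_def using \<open>prob_space M\<close> L rate a(1) by (rule measure_excess_bounded_tendsto_1)
  show ?thesis
  proof (rule order_tendstoI)
    fix y :: real assume "y < 0"
    then show "eventually (\<lambda>N. y < prob {\<omega>\<in>space M. \<exists>n\<le>N. c * real N \<le> L n \<omega>}) sequentially"
      by (intro always_eventually allI less_le_trans[OF _ measure_nonneg])
  next
    fix y :: real assume "0 < y"
    then obtain m where m: "1 - y < prob (B m)"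
      using order_tendstoD(1)[OF B_tendsto, of "1 - y"] by (auto simp: eventually_sequentially)
    have "prob {\<omega>\<in>space M. \<exists>n\<le>N. c * real N \<le> L n \<omega>} < y" if "real m \<le> (c - a) * real N" for N
    proof -
      have "prob {\<omega>\<in>space M. \<exists>n\<le>N. c * real N \<le> L n \<omega>} \<le> prob (space M - B m)"
        using crossing_subset_excess_unbounded[OF a(2) that, where \<Omega>="space M" and L=L] B_sets
        unfolding B_def by (intro finite_measure_mono) auto
      then show ?thesis
        using m prob_compl[OF B_sets] by simp
    qed
    moreover have "eventually (\<lambda>N. real m \<le> (c - a) * real N) sequentially"
      using a by real_asymp
    ultimately show "eventually (\<lambda>N. prob {\<omega>\<in>space M. \<exists>n\<le>N. c * real N \<le> L n \<omega>} < y) sequentially"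
      by (auto elim: eventually_mono)
  qed
qed

section \<open>Expected stopping times under a change of measure\<close>

(* T is a stopping time of F and E is F_T-measurable on {T < \<infinity>}; nothing is required on {T = \<infinity>}. *)
definition decided_at :: "(nat \<Rightarrow> 'a measure) \<Rightarrow> ('a \<Rightarrow> enat) \<Rightarrow> ('a \<Rightarrow> bool) \<Rightarrow> bool" where
  "decided_at F T E \<longleftrightarrow> (\<forall>n. {\<omega>\<in>space (F n). T \<omega> = enat n} \<in> sets (F n) \<and>
                          {\<omega>\<in>space (F n). E \<omega> \<and> T \<omega> = enat n} \<in> sets (F n))"

lemma decided_at_Not:
  assumes "decided_at F T E"
  shows "decided_at F T (\<lambda>\<omega>. \<not> E \<omega>)"
proof -
  have "{\<omega>\<in>space (F n). \<not> E \<omega> \<and> T \<omega> = enat n} =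
      {\<omega>\<in>space (F n). T \<omega> = enat n} - {\<omega>\<in>space (F n). E \<omega> \<and> T \<omega> = enat n}" for n
    by auto
  then show ?thesis
    using assms unfolding decided_at_def by auto
qed

lemma (in prob_space) nn_integral_enat_ge:
  assumes "{x\<in>space M. T x \<le> enat N} \<in> events"
  shows "ennreal (real (Suc N) * (1 - prob {x\<in>space M. T x \<le> enat N}))
    \<le> (\<integral>\<^sup>+x. ennreal_of_enat (T x) \<partial>M)"
proof -
  let ?G = "space M - {x\<in>space M. T x \<le> enat N}"
  have "ennreal (real (Suc N) * (1 - prob {x\<in>space M. T x \<le> enat N}))
      = ennreal (real (Suc N) * prob ?G)"
    using prob_compl[OF assms] by simp
  also have "\<dots> = (\<integral>\<^sup>+x. ennreal (real (Suc N)) * indicator ?G x \<partial>M)"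
    using assms by (simp add: nn_integral_cmult_indicator emeasure_eq_measure ennreal_mult)
  also have "\<dots> \<le> (\<integral>\<^sup>+x. ennreal_of_enat (T x) \<partial>M)"
  proof (rule nn_integral_mono)
    fix x
    show "ennreal (real (Suc N)) * indicator ?G x \<le> ennreal_of_enat (T x)"
      by (cases "T x") (auto simp: indicator_def ennreal_of_nat_eq_real_of_nat simp del: of_nat_Suc)
  qed
  finally show ?thesis .
qed

lemma exp_mult_eq_powr:
  fixes b s :: real
  assumes "0 < b" "b \<le> 1"
  shows "exp ((1 - s) * \<bar>ln b\<bar>) * b = b powr s"
proof -
  have "b powr s = exp (s * ln b)"
    using assms by (simp add: powr_def)
  also have "s * ln b = (1 - s) * \<bar>ln b\<bar> + ln b"
    using assms by (simp add: algebra_simps)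
  also have "exp ((1 - s) * \<bar>ln b\<bar> + ln b) = exp ((1 - s) * \<bar>ln b\<bar>) * b"
    by (simp only: exp_add exp_ln[OF assms(1)])
  finally show ?thesis ..
qed

(* L n stands for the log-likelihood ratio log (dP/dQ) on F n; the change-of-measure inequality
   is the only property of it that is used. *)
locale llr_filtration =
  fixes P Q :: "'a measure" and F :: "nat \<Rightarrow> 'a measure" and L :: "nat \<Rightarrow> 'a \<Rightarrow> real"
  assumes prob_space_P: "prob_space P" and prob_space_Q: "prob_space Q"
    and sets_Q: "sets Q = sets P"
    and space_F: "\<And>n. space (F n) = space P" and sets_F: "\<And>n. sets (F n) \<subseteq> sets P"
    and L_measurable: "\<And>n. L n \<in> borel_measurable (F n)"
    and change_of_measure: "\<And>n c G. G \<in> sets (F n) \<Longrightarrow> (\<And>\<omega>. \<omega> \<in> G \<Longrightarrow> L n \<omega> < c) \<Longrightarrow>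
          measure P G \<le> exp c * measure Q G"
begin

sublocale P: prob_space P
  by (rule prob_space_P)

sublocale Q: prob_space Q
  by (rule prob_space_Q)

lemma space_Q: "space Q = space P"
  using sets_Q by (rule sets_eq_imp_space_eq)

lemma L_measurable_P [measurable]: "L n \<in> borel_measurable P"
  by (rule measurable_from_subalg[OF _ L_measurable]) (simp add: subalgebra_def space_F sets_F)

lemma sets_stopped_le:
  assumes "decided_at F T E"
  shows "{\<omega>\<in>space P. T \<omega> \<le> enat N} \<in> sets P"
proof -
  have "{\<omega>\<in>space P. T \<omega> \<le> enat N} = (\<Union>n\<le>N. {\<omega>\<in>space (F n). T \<omega> = enat n})"
    by (auto simp: space_F enat_ile) (metis atMost_iff enat_ile enat_ord_simps(1))
  moreover have "{\<omega>\<in>space (F n). T \<omega> = enat n} \<in> sets P" for n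
    using assms sets_F unfolding decided_at_def by blast
  ultimately show ?thesis
    by auto
qed

lemma decided_below_in_F:
  assumes "decided_at F T E"
  shows "{\<omega>\<in>space P. E \<omega> \<and> T \<omega> = enat n \<and> L n \<omega> < c} \<in> sets (F n)"
proof -
  have "{\<omega>\<in>space P. E \<omega> \<and> T \<omega> = enat n \<and> L n \<omega> < c} =
      {\<omega>\<in>space (F n). E \<omega> \<and> T \<omega> = enat n} \<inter> {\<omega>\<in>space (F n). L n \<omega> < c}"
    by (auto simp: space_F)
  moreover have "{\<omega>\<in>space (F n). L n \<omega> < c} \<in> sets (F n)"
    using L_measurable[of n] by measurable
  ultimately show ?thesis
    using assms by (auto simp: decided_at_def)
qed

lemma measure_decided_below_le:
  assumes "decided_at F T E" and E: "{\<omega>\<in>space P. E \<omega>} \<in> sets P"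
  shows "measure P (\<Union>n\<le>N. {\<omega>\<in>space P. E \<omega> \<and> T \<omega> = enat n \<and> L n \<omega> < c})
    \<le> exp c * measure Q {\<omega>\<in>space Q. E \<omega>}"
proof -
  define G where "G n = {\<omega>\<in>space P. E \<omega> \<and> T \<omega> = enat n \<and> L n \<omega> < c}" for n
  have G_F: "G n \<in> sets (F n)" for n
    unfolding G_def using assms(1) by (rule decided_below_in_F)
  then have G_Q: "G n \<in> sets Q" for n
    using sets_F sets_Q by blast
  have "measure P (\<Union>n\<le>N. G n) \<le> (\<Sum>n\<le>N. measure P (G n))"
    by (rule measure_UNION_le) (use G_F sets_F in auto)
  also have "\<dots> \<le> (\<Sum>n\<le>N. exp c * measure Q (G n))"
    by (intro sum_mono change_of_measure[OF G_F]) (auto simp: G_def)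
  also have "\<dots> = exp c * measure Q (\<Union>n\<le>N. G n)"
    using G_Q by (subst Q.finite_measure_finite_Union)
      (auto simp: sum_distrib_left disjoint_family_on_def G_def)
  also have "\<dots> \<le> exp c * measure Q {\<omega>\<in>space Q. E \<omega>}"
    using E by (intro mult_left_mono Q.finite_measure_mono) (auto simp: G_def sets_Q space_Q)
  finally show ?thesis
    unfolding G_def .
qed

lemma prob_stopped_early_le:
  assumes "decided_at F T E" and E: "{\<omega>\<in>space P. E \<omega>} \<in> sets P"
  shows "measure P {\<omega>\<in>space P. T \<omega> \<le> enat N}
    \<le> measure P {\<omega>\<in>space P. \<not> E \<omega>} + measure P {\<omega>\<in>space P. \<exists>n\<le>N. c \<le> L n \<omega>}
       + exp c * measure Q {\<omega>\<in>space Q. E \<omega>}"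
proof -
  define U where "U = (\<Union>n\<le>N. {\<omega>\<in>space P. E \<omega> \<and> T \<omega> = enat n \<and> L n \<omega> < c})"
  have U: "U \<in> sets P"
    unfolding U_def using decided_below_in_F[OF assms(1)] sets_F by blast
  have notE: "{\<omega>\<in>space P. \<not> E \<omega>} \<in> sets P"
    using E by (rule sets.sets_Collect_neg)
  have "{\<omega>\<in>space P. T \<omega> \<le> enat N}
      \<subseteq> {\<omega>\<in>space P. \<not> E \<omega>} \<union> {\<omega>\<in>space P. \<exists>n\<le>N. c \<le> L n \<omega>} \<union> U"
  proof
    fix \<omega> assume \<omega>: "\<omega> \<in> {\<omega>\<in>space P. T \<omega> \<le> enat N}"
    then obtain m where "T \<omega> = enat m" "m \<le> N"
      by (cases "T \<omega>") auto
    with \<omega> show "\<omega> \<in> {\<omega>\<in>space P. \<not> E \<omega>} \<union> {\<omega>\<in>space P. \<exists>n\<le>N. c \<le> L n \<omega>} \<union> U"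
      by (cases "c \<le> L m \<omega>") (auto simp: U_def not_le)
  qed
  then have "measure P {\<omega>\<in>space P. T \<omega> \<le> enat N}
      \<le> measure P ({\<omega>\<in>space P. \<not> E \<omega>} \<union> {\<omega>\<in>space P. \<exists>n\<le>N. c \<le> L n \<omega>} \<union> U)"
    using notE U by (intro P.finite_measure_mono) auto
  also have "\<dots> \<le> measure P {\<omega>\<in>space P. \<not> E \<omega>} + measure P {\<omega>\<in>space P. \<exists>n\<le>N. c \<le> L n \<omega>}
      + measure P U"
    using notE U by (intro order_trans[OF measure_Un_le] add_right_mono measure_Un_le) auto
  also have "measure P U \<le> exp c * measure Q {\<omega>\<in>space Q. E \<omega>}"
    unfolding U_def using assms by (rule measure_decided_below_le)
  finally show ?thesis
    by simp
qed

lemma expected_stopping_time_ge_horizon: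
  assumes "decided_at F T E" and "{\<omega>\<in>space P. E \<omega>} \<in> sets P"
  shows "ennreal (real (Suc N) * (1 - measure P {\<omega>\<in>space P. \<not> E \<omega>}
      - measure P {\<omega>\<in>space P. \<exists>n\<le>N. c \<le> L n \<omega>} - exp c * measure Q {\<omega>\<in>space Q. E \<omega>}))
    \<le> (\<integral>\<^sup>+\<omega>. ennreal_of_enat (T \<omega>) \<partial>P)"
proof -
  have "real (Suc N) * (1 - measure P {\<omega>\<in>space P. \<not> E \<omega>}
      - measure P {\<omega>\<in>space P. \<exists>n\<le>N. c \<le> L n \<omega>} - exp c * measure Q {\<omega>\<in>space Q. E \<omega>})
    \<le> real (Suc N) * (1 - measure P {\<omega>\<in>space P. T \<omega> \<le> enat N})"
    using prob_stopped_early_le[OF assms, of N c] by (intro mult_left_mono) auto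
  then show ?thesis
    using P.nn_integral_enat_ge[OF sets_stopped_le[OF assms(1)]] by (meson ennreal_leI order_trans)
qed

lemma expected_stopping_time_ge_ln:
  assumes T: "decided_at F T E" and E: "{\<omega>\<in>space P. E \<omega>} \<in> sets P"
    and I: "0 < I" and \<epsilon>: "0 < \<epsilon>" "\<epsilon> < 1" and b: "0 < b" "b \<le> 1"
    and errors: "measure P {\<omega>\<in>space P. \<not> E \<omega>} \<le> \<epsilon> / 6" "measure Q {\<omega>\<in>space Q. E \<omega>} \<le> b"
    and b_powr: "b powr (\<epsilon> / 4) \<le> \<epsilon> / 6"
    and crossing: "measure P {\<omega>\<in>space P. \<exists>n\<le>N. (1 - \<epsilon> / 4) * \<bar>ln b\<bar> \<le> L n \<omega>} \<le> \<epsilon> / 6"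
    and N: "(1 - \<epsilon> / 2) * \<bar>ln b\<bar> / I \<le> real (Suc N)"
  shows "ennreal ((1 - \<epsilon>) * \<bar>ln b\<bar> / I) \<le> (\<integral>\<^sup>+\<omega>. ennreal_of_enat (T \<omega>) \<partial>P)"
proof -
  let ?c = "(1 - \<epsilon> / 4) * \<bar>ln b\<bar>"
  have "exp ?c * measure Q {\<omega>\<in>space Q. E \<omega>} \<le> exp ?c * b"
    using errors(2) by simp
  also have "\<dots> = b powr (\<epsilon> / 4)"
    using b by (rule exp_mult_eq_powr)
  finally have early: "1 - \<epsilon> / 2 \<le> 1 - measure P {\<omega>\<in>space P. \<not> E \<omega>}
      - measure P {\<omega>\<in>space P. \<exists>n\<le>N. ?c \<le> L n \<omega>} - exp ?c * measure Q {\<omega>\<in>space Q. E \<omega>}"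
    using errors(1) b_powr crossing by linarith
  have "1 - \<epsilon> \<le> (1 - \<epsilon> / 2) * (1 - \<epsilon> / 2)"
    by (simp add: algebra_simps)
  then have "(1 - \<epsilon>) * \<bar>ln b\<bar> / I \<le> ((1 - \<epsilon> / 2) * (1 - \<epsilon> / 2)) * \<bar>ln b\<bar> / I"
    using I by (intro divide_right_mono mult_right_mono) auto
  also have "\<dots> = (1 - \<epsilon> / 2) * ((1 - \<epsilon> / 2) * \<bar>ln b\<bar> / I)"
    by simp
  also have "\<dots> \<le> (1 - \<epsilon> / 2) * real (Suc N)"
    using N \<epsilon> by (intro mult_left_mono) auto
  also have "\<dots> \<le> real (Suc N) * (1 - measure P {\<omega>\<in>space P. \<not> E \<omega>}
      - measure P {\<omega>\<in>space P. \<exists>n\<le>N. ?c \<le> L n \<omega>} - exp ?c * measure Q {\<omega>\<in>space Q. E \<omega>})"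
    using early by (subst mult.commute) (intro mult_left_mono, auto)
  finally show ?thesis
    using expected_stopping_time_ge_horizon[OF T E, of N ?c] by (meson ennreal_leI order_trans)
qed

lemma expected_stopping_time_ge_small:
  assumes T: "decided_at F T E" and E: "{\<omega>\<in>space P. E \<omega>} \<in> sets P"
    and I: "0 < I" and \<epsilon>: "0 < \<epsilon>" "\<epsilon> < 1"
    and N0: "\<And>N. N0 \<le> N \<Longrightarrow> measure P {\<omega>\<in>space P. \<exists>n\<le>N.
        (1 - \<epsilon> / 4) / (1 - \<epsilon> / 2) * I * real N \<le> L n \<omega>} < \<epsilon> / 6"
    and notE: "measure P {\<omega>\<in>space P. \<not> E \<omega>} \<le> \<epsilon> / 6" and QE: "measure Q {\<omega>\<in>space Q. E \<omega>} \<le> b"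
    and b: "0 < b" "b < \<epsilon> / 6" "b < (\<epsilon> / 6) powr (4 / \<epsilon>)"
      "b < exp (- real N0 * I / (1 - \<epsilon> / 2))"
  shows "ennreal ((1 - \<epsilon>) * \<bar>ln b\<bar> / I) \<le> (\<integral>\<^sup>+\<omega>. ennreal_of_enat (T \<omega>) \<partial>P)"
proof -
  define q where "q = 1 - \<epsilon> / 2"
  define t where "t = q * \<bar>ln b\<bar> / I"
  define N where "N = nat \<lfloor>t\<rfloor>"
  have q: "0 < q"
    using \<epsilon> by (simp add: q_def)
  have "0 \<le> t"
    using q I by (simp add: t_def)
  then have "real N = of_int \<lfloor>t\<rfloor>"
    by (simp add: N_def)
  then have N_floor: "real N \<le> t" "t \<le> real (Suc N)"
    using of_int_floor_le[of t] real_of_int_floor_add_one_gt[of t] unfolding of_nat_Suc by linarith+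
  have "N0 \<le> N"
  proof -
    have "ln b < - real N0 * I / q"
      using b by (metis exp_less_cancel_iff exp_ln q_def)
    then have "real N0 < t"
      using q I b \<epsilon> by (simp add: t_def field_simps)
    then show ?thesis
      by (simp add: N_def le_nat_floor)
  qed
  have "(1 - \<epsilon> / 4) / q * I * real N \<le> (1 - \<epsilon> / 4) / q * I * t"
    using N_floor \<epsilon> q I by (intro mult_left_mono) auto
  also have "\<dots> = (1 - \<epsilon> / 4) * \<bar>ln b\<bar>"
    using q I by (simp add: t_def)
  finally have "measure P {\<omega>\<in>space P. \<exists>n\<le>N. (1 - \<epsilon> / 4) * \<bar>ln b\<bar> \<le> L n \<omega>}
      \<le> measure P {\<omega>\<in>space P. \<exists>n\<le>N. (1 - \<epsilon> / 4) / q * I * real N \<le> L n \<omega>}"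
    by (intro P.finite_measure_mono) (auto intro: order_trans)
  also have "\<dots> \<le> \<epsilon> / 6"
    using N0[OF \<open>N0 \<le> N\<close>] by (simp add: q_def)
  finally have crossing: "measure P {\<omega>\<in>space P. \<exists>n\<le>N. (1 - \<epsilon> / 4) * \<bar>ln b\<bar> \<le> L n \<omega>} \<le> \<epsilon> / 6" .
  have "b powr (\<epsilon> / 4) < ((\<epsilon> / 6) powr (4 / \<epsilon>)) powr (\<epsilon> / 4)"
    using b \<epsilon> by (intro powr_less_mono2) auto
  also have "\<dots> = \<epsilon> / 6"
    using \<epsilon> by (simp add: powr_powr)
  finally have "b powr (\<epsilon> / 4) \<le> \<epsilon> / 6"
    by simp
  then show ?thesis
    using b \<epsilon> I notE QE crossing N_floor(2)
    by (intro expected_stopping_time_ge_ln[OF T E]) (simp_all add: q_def t_def)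
qed

lemma expected_stopping_time_ge:
  assumes rate: "AE \<omega> in P. limsup (\<lambda>n. ereal (L n \<omega> / real n)) \<le> ereal I"
    and I: "0 < I" and \<epsilon>: "0 < \<epsilon>"
  obtains \<delta> where "0 < \<delta>"
    and "\<And>T E b. decided_at F T E \<Longrightarrow> {\<omega>\<in>space P. E \<omega>} \<in> sets P \<Longrightarrow>
           measure P {\<omega>\<in>space P. \<not> E \<omega>} < \<delta> \<Longrightarrow> 0 < b \<Longrightarrow> b < \<delta> \<Longrightarrow>
           measure Q {\<omega>\<in>space Q. E \<omega>} \<le> b \<Longrightarrow>
           ennreal ((1 - \<epsilon>) * \<bar>ln b\<bar> / I) \<le> (\<integral>\<^sup>+\<omega>. ennreal_of_enat (T \<omega>) \<partial>P)"
proof (cases "\<epsilon> < 1")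
  case False
  have "ennreal ((1 - \<epsilon>) * \<bar>ln b\<bar> / I) = 0" for b
    using False I by (intro ennreal_neg divide_nonpos_pos mult_nonpos_nonneg) auto
  then show ?thesis
    by (intro that[of 1]) (simp_all only: zero_le zero_less_one)
next
  case True
  (* at the horizon N ~ (1 - \<epsilon>/2) |ln b| / I the threshold (1 - \<epsilon>/4) |ln b| is \<rho> I N
     with \<rho> > 1, so it is rarely reached before N *)
  let ?\<rho> = "(1 - \<epsilon> / 4) / (1 - \<epsilon> / 2)"
  have "(\<lambda>N. measure P {\<omega>\<in>space P. \<exists>n\<le>N. ?\<rho> * I * real N \<le> L n \<omega>}) \<longlonglongrightarrow> 0"
    using True I \<epsilon> by (intro measure_crossing_tendsto_0[OF prob_space_P L_measurable_P rate])
      (auto simp: field_simps)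
  then have "eventually (\<lambda>N. measure P {\<omega>\<in>space P. \<exists>n\<le>N. ?\<rho> * I * real N \<le> L n \<omega>} < \<epsilon> / 6)
      sequentially"
    using \<epsilon> by (intro order_tendstoD(2)) auto
  then obtain N0 where "\<And>N. N0 \<le> N \<Longrightarrow>
      measure P {\<omega>\<in>space P. \<exists>n\<le>N. ?\<rho> * I * real N \<le> L n \<omega>} < \<epsilon> / 6"
    unfolding eventually_sequentially by blast
  then show ?thesis
    using True I \<epsilon>
    by (intro that[of "min (\<epsilon> / 6) (min ((\<epsilon> / 6) powr (4 / \<epsilon>))
        (exp (- real N0 * I / (1 - \<epsilon> / 2))))"] expected_stopping_time_ge_small) auto
qed

end

section \<open>Independent data streams\<close>

lemma prod_le_exp_mult_prod:
  fixes r :: "'i \<Rightarrow> real"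
  assumes "finite A" "finite C" "\<And>k. k \<in> A \<union> C \<Longrightarrow> 0 < r k"
    and "(\<Sum>k\<in>A - C. ln (r k)) - (\<Sum>k\<in>C - A. ln (r k)) < c"
  shows "(\<Prod>k\<in>A. r k) \<le> exp c * (\<Prod>k\<in>C. r k)"
proof -
  have prod_exp: "(\<Prod>k\<in>X. r k) = exp (\<Sum>k\<in>X. ln (r k))" if "X \<subseteq> A \<union> C" for X
    using finite_subset[OF that] that assms(1-3) by (auto simp: exp_sum intro!: prod.cong)
  have "(\<Sum>k\<in>A. ln (r k)) - (\<Sum>k\<in>C. ln (r k)) = (\<Sum>k\<in>A - C. ln (r k)) - (\<Sum>k\<in>C - A. ln (r k))"
    using assms(1,2) by (simp add: sum.Int_Diff[of A _ C] sum.Int_Diff[of C _ A] Int_commute)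
  then have "(\<Sum>k\<in>A. ln (r k)) \<le> c + (\<Sum>k\<in>C. ln (r k))"
    using assms(4) by linarith
  then show ?thesis
    by (simp add: prod_exp exp_add[symmetric])
qed

lemma ennreal_prod_le_exp_mult_prod:
  fixes r :: "'i \<Rightarrow> ennreal"
  assumes "finite A" "finite C" and r: "\<And>k. k \<in> A \<union> C \<Longrightarrow> r k \<noteq> 0 \<and> r k \<noteq> \<infinity>"
    and "(\<Sum>k\<in>A - C. ln (enn2real (r k))) - (\<Sum>k\<in>C - A. ln (enn2real (r k))) < c"
  shows "(\<Prod>k\<in>A. r k) \<le> ennreal (exp c) * (\<Prod>k\<in>C. r k)"
proof -
  have pos: "0 < enn2real (r k)" if "k \<in> A \<union> C" for k
    using r[OF that] by (simp add: enn2real_positive_iff less_top zero_less_iff_neq_zero)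
  have prod_eq: "(\<Prod>k\<in>X. r k) = ennreal (\<Prod>k\<in>X. enn2real (r k))" if "X \<subseteq> A \<union> C" for X
  proof -
    have "(\<Prod>k\<in>X. r k) = (\<Prod>k\<in>X. ennreal (enn2real (r k)))"
      using that r by (intro prod.cong) (auto simp: ennreal_enn2real_if)
    also have "\<dots> = ennreal (\<Prod>k\<in>X. enn2real (r k))"
      by (rule prod_ennreal) simp
    finally show ?thesis .
  qed
  have "(\<Prod>k\<in>A. enn2real (r k)) \<le> exp c * (\<Prod>k\<in>C. enn2real (r k))"
    using assms(1,2) pos assms(4) by (rule prod_le_exp_mult_prod)
  moreover have "0 \<le> (\<Prod>k\<in>C. enn2real (r k))"
    by (simp add: prod_nonneg)
  ultimately have "ennreal (\<Prod>k\<in>A. enn2real (r k))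
      \<le> ennreal (exp c) * ennreal (\<Prod>k\<in>C. enn2real (r k))"
    by (metis ennreal_leI ennreal_mult exp_ge_zero)
  then show ?thesis
    by (simp add: prod_eq)
qed

lemma PiM_density:
  fixes M :: "'i \<Rightarrow> 'a measure"
  assumes fin: "finite I" and M: "\<And>i. i \<in> I \<Longrightarrow> prob_space (M i)"
    and Mg: "\<And>i. i \<in> I \<Longrightarrow> prob_space (density (M i) (g i))"
    and g: "\<And>i. i \<in> I \<Longrightarrow> g i \<in> borel_measurable (M i)"
  shows "PiM I (\<lambda>i. density (M i) (g i)) = density (PiM I M) (\<lambda>x. \<Prod>i\<in>I. g i (x i))"
proof -
  define M' where "M' i = (if i \<in> I then M i else return (count_space UNIV) undefined)" for i
  define N where
    "N i = (if i \<in> I then density (M i) (g i) else return (count_space UNIV) undefined)" for i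
  interpret M': product_prob_space M'
    by (intro product_prob_spaceI) (auto simp: M'_def M prob_space_return)
  interpret N: product_prob_space N
    by (intro product_prob_spaceI) (auto simp: N_def Mg prob_space_return)
  have g': "g i \<in> borel_measurable (M' i)" if "i \<in> I" for i
    using g that by (simp add: M'_def)
  have "density (PiM I M') (\<lambda>x. \<Prod>i\<in>I. g i (x i)) = PiM I N"
  proof (rule N.PiM_eqI[OF fin])
    show "sets (density (PiM I M') (\<lambda>x. \<Prod>i\<in>I. g i (x i))) = sets (PiM I N)"
      by (auto simp: N_def M'_def intro!: sets_PiM_cong)
  next
    fix A assume A: "\<And>i. i \<in> I \<Longrightarrow> A i \<in> sets (N i)"
    then have A': "A i \<in> sets (M' i)" if "i \<in> I" for i
      using that by (simp add: N_def M'_def)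
    have "(\<Prod>i\<in>I. g i (x i)) * indicator (PiE I A) x = (\<Prod>i\<in>I. g i (x i) * indicator (A i) (x i))"
      if "x \<in> space (PiM I M')" for x
      using that fin by (auto simp: space_PiM PiE_def Pi_def prod.distrib indicator_def)
    then have "emeasure (density (PiM I M') (\<lambda>x. \<Prod>i\<in>I. g i (x i))) (PiE I A)
        = (\<integral>\<^sup>+x. (\<Prod>i\<in>I. g i (x i) * indicator (A i) (x i)) \<partial>PiM I M')"
      using A' g' fin by (simp add: emeasure_density sets_PiM_I_finite cong: nn_integral_cong)
    also have "\<dots> = (\<Prod>i\<in>I. \<integral>\<^sup>+y. g i y * indicator (A i) y \<partial>M' i)"
      using A' g' by (intro M'.product_nn_integral_prod fin) auto
    also have "\<dots> = (\<Prod>i\<in>I. emeasure (N i) (A i))"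
      using A' g' by (intro prod.cong) (auto simp: N_def M'_def emeasure_density)
    finally show "emeasure (density (PiM I M') (\<lambda>x. \<Prod>i\<in>I. g i (x i))) (PiE I A)
        = (\<Prod>i\<in>I. emeasure (N i) (A i))" .
  qed
  moreover have "PiM I M' = PiM I M" "PiM I N = PiM I (\<lambda>i. density (M i) (g i))"
    by (auto simp: M'_def N_def intro!: PiM_cong)
  ultimately show ?thesis
    by simp
qed

lemma eq_enat_in_filtration:
  assumes mono: "\<And>n. sets (F n) \<subseteq> sets (F (Suc n))"
    and P_le: "\<And>n. {\<omega>\<in>\<Omega>. P \<omega> \<and> T \<omega> \<le> enat n} \<in> sets (F n)"
    and T_le: "\<And>n. {\<omega>\<in>\<Omega>. T \<omega> \<le> enat n} \<in> sets (F n)"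
  shows "{\<omega>\<in>\<Omega>. P \<omega> \<and> T \<omega> = enat n} \<in> sets (F n)"
proof (cases n)
  case 0
  then show ?thesis
    using P_le[of 0] by (simp add: zero_enat_def[symmetric])
next
  case (Suc m)
  have "{\<omega>\<in>\<Omega>. P \<omega> \<and> T \<omega> = enat n} = {\<omega>\<in>\<Omega>. P \<omega> \<and> T \<omega> \<le> enat n} - {\<omega>\<in>\<Omega>. T \<omega> \<le> enat m}"
    using Suc by (auto simp: enat_ile) (metis Suc_leI enat_ile enat_ord_simps(1) le_antisym not_le)
  moreover have "{\<omega>\<in>\<Omega>. T \<omega> \<le> enat m} \<in> sets (F n)"
    using T_le[of m] mono[of m] Suc by auto
  ultimately show ?thesis
    using P_le[of n] by auto
qed

lemma IAC_pos:
  assumes "finite A" "finite C" "(k \<in> A) \<noteq> (k \<in> C)"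
    and pos: "\<And>k. k \<in> A \<union> C \<Longrightarrow> 0 < I k \<and> 0 < J k"
  shows "0 < IAC I J A C"
proof -
  have "0 \<le> sum I (A - C)" "0 \<le> sum J (C - A)"
    by (intro sum_nonneg; use pos in force)+
  moreover have "0 < sum I (A - C) \<or> 0 < sum J (C - A)"
  proof (cases "k \<in> A")
    case True
    then have "0 < sum I (A - C)"
      using assms by (intro sum_pos2[of _ k]) (auto intro: less_imp_le)
    then show ?thesis ..
  next
    case False
    then have "0 < sum J (C - A)"
      using assms by (intro sum_pos2[of _ k]) (auto intro: less_imp_le)
    then show ?thesis ..
  qed
  ultimately show ?thesis
    unfolding IAC_def by linarith
qed

locale multistream =
  fixes K :: nat and S :: "nat \<Rightarrow> 'x measure" and P0 P1 :: "nat \<Rightarrow> (nat \<Rightarrow> 'x) measure"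
  assumes laws: "\<And>k. k \<in> {1..K} \<Longrightarrow> prob_space (P0 k) \<and> prob_space (P1 k) \<and>
                  sets (P0 k) = sets (seqsp (S k)) \<and> sets (P1 k) = sets (seqsp (S k))"
    and mac: "\<And>k n. k \<in> {1..K} \<Longrightarrow>
                  absolutely_continuous (marg (P0 k) (S k) n) (marg (P1 k) (S k) n) \<and>
                  absolutely_continuous (marg (P1 k) (S k) n) (marg (P0 k) (S k) n)"
begin

abbreviation marg0 :: "nat \<Rightarrow> nat \<Rightarrow> (nat \<Rightarrow> 'x) measure" where
  "marg0 k n \<equiv> marg (P0 k) (S k) n"

abbreviation marg1 :: "nat \<Rightarrow> nat \<Rightarrow> (nat \<Rightarrow> 'x) measure" where
  "marg1 k n \<equiv> marg (P1 k) (S k) n"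

abbreviation lr :: "nat \<Rightarrow> nat \<Rightarrow> (nat \<Rightarrow> 'x) \<Rightarrow> ennreal" where
  "lr k n \<equiv> RN_deriv (marg0 k n) (marg1 k n)"

definition obs :: "nat \<Rightarrow> (nat \<Rightarrow> nat \<Rightarrow> 'x) \<Rightarrow> nat \<Rightarrow> nat \<Rightarrow> 'x" where
  "obs n \<omega> = (\<lambda>k\<in>{1..K}. restrict (\<omega> k) {1..n})"

definition obs_space :: "nat \<Rightarrow> (nat \<Rightarrow> nat \<Rightarrow> 'x) measure" where
  "obs_space n = PiM {1..K} (\<lambda>k. PiM {1..n} (\<lambda>_. S k))"

definition obs_law :: "nat set \<Rightarrow> nat \<Rightarrow> (nat \<Rightarrow> nat \<Rightarrow> 'x) measure" where
  "obs_law X n = PiM {1..K} (\<lambda>k. if k \<in> X then marg1 k n else marg0 k n)"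

definition obs_llr :: "nat set \<Rightarrow> nat set \<Rightarrow> nat \<Rightarrow> (nat \<Rightarrow> nat \<Rightarrow> 'x) \<Rightarrow> real" where
  "obs_llr A C n y =
     (\<Sum>k\<in>A - C. ln (enn2real (lr k n (y k)))) - (\<Sum>k\<in>C - A. ln (enn2real (lr k n (y k))))"

(* \<lambda>_A(n) - \<lambda>_C(n) in the paper's notation: the streams in A \<inter> C cancel *)
definition joint_llr :: "nat set \<Rightarrow> nat set \<Rightarrow> nat \<Rightarrow> (nat \<Rightarrow> nat \<Rightarrow> 'x) \<Rightarrow> real" where
  "joint_llr A C n \<omega> = (\<Sum>k\<in>A - C. llr (P0 k) (P1 k) (S k) n (\<omega> k))
     - (\<Sum>k\<in>C - A. llr (P0 k) (P1 k) (S k) n (\<omega> k))"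

lemma sets_joint_law: "sets (joint_law K P0 P1 X) = sets (joint_space K S)"
  unfolding joint_law_def joint_space_def by (rule sets_PiM_cong) (auto simp: laws)

lemma space_joint_law: "space (joint_law K P0 P1 X) = space (joint_space K S)"
  using sets_joint_law by (rule sets_eq_imp_space_eq)

lemma prob_space_joint_law: "prob_space (joint_law K P0 P1 X)"
  unfolding joint_law_def by (rule prob_space_PiM) (use laws in auto)

lemma measurable_restrict_seqsp:
  "sets P = sets (seqsp (S k)) \<Longrightarrow> (\<lambda>x. restrict x {1..n}) \<in> P \<rightarrow>\<^sub>M PiM {1..n} (\<lambda>_. S k)"
  unfolding seqsp_def
  by (subst measurable_cong_sets[OF _ refl], assumption) (rule measurable_restrict_subset, auto)

lemma prob_space_marg:
  assumes "k \<in> {1..K}"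
  shows "prob_space (marg0 k n)" "prob_space (marg1 k n)"
  using laws[OF assms] measurable_restrict_seqsp
  by (auto simp: marg_def intro: prob_space.prob_space_distr)

lemma density_lr:
  assumes "k \<in> {1..K}"
  shows "density (marg0 k n) (lr k n) = marg1 k n"
proof -
  interpret prob_space "marg0 k n"
    using prob_space_marg[OF assms] by simp
  show ?thesis
    by (rule density_RN_deriv)
      (use mac[OF assms] prob_space_marg[OF assms] in \<open>auto simp: marg_def\<close>)
qed

lemma AE_lr_pos_finite:
  assumes k: "k \<in> {1..K}"
  shows "AE y in marg0 k n. lr k n y \<noteq> 0 \<and> lr k n y \<noteq> \<infinity>"
proof -
  interpret M0: prob_space "marg0 k n"
    using prob_space_marg[OF k] by simp
  interpret M1: prob_space "marg1 k n"
    using prob_space_marg[OF k] by simp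
  have lr_measurable[measurable]: "lr k n \<in> borel_measurable (marg0 k n)"
    by simp
  define Z where "Z = {y\<in>space (marg0 k n). lr k n y = 0}"
  have Z: "Z \<in> sets (marg0 k n)"
    unfolding Z_def by measurable
  have "emeasure (marg1 k n) Z = (\<integral>\<^sup>+y. lr k n y * indicator Z y \<partial>marg0 k n)"
    using density_lr[OF k, of n] Z by (metis emeasure_density lr_measurable)
  also have "\<dots> = (\<integral>\<^sup>+y. 0 \<partial>marg0 k n)"
    by (rule nn_integral_cong) (auto simp: Z_def indicator_def)
  finally have "Z \<in> null_sets (marg1 k n)"
    using Z by (auto simp: null_sets_def marg_def)
  then have "Z \<in> null_sets (marg0 k n)"
    using mac[OF k, of n] by (auto simp: absolutely_continuous_def)
  then have "AE y in marg0 k n. lr k n y \<noteq> 0"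
    using Z by (auto simp: AE_iff_null_sets Z_def)
  moreover have "AE y in marg0 k n. lr k n y \<noteq> \<infinity>"
    by (rule M0.RN_deriv_finite)
      (use mac[OF k] prob_space_marg[OF k] M1.sigma_finite_measure in \<open>auto simp: marg_def\<close>)
  ultimately show ?thesis
    by auto
qed

lemma measurable_obs: "obs n \<in> joint_space K S \<rightarrow>\<^sub>M obs_space n"
  unfolding obs_def obs_space_def joint_space_def
proof (rule measurable_restrict)
  fix k assume k: "k \<in> {1..K}"
  show "(\<lambda>\<omega>. restrict (\<omega> k) {1..n}) \<in> PiM {1..K} (\<lambda>k. seqsp (S k)) \<rightarrow>\<^sub>M PiM {1..n} (\<lambda>_. S k)"
    by (rule measurable_compose[OF measurable_component_singleton[OF k] measurable_restrict_seqsp])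
      simp
qed

lemma filt_eq: "filt K S n = vimage_algebra (space (joint_space K S)) (obs n) (obs_space n)"
  by (simp add: filt_def obs_def[abs_def] obs_space_def)

lemma space_filt: "space (filt K S n) = space (joint_space K S)"
  by (simp add: filt_eq)

lemma sets_filt_subset: "sets (filt K S n) \<subseteq> sets (joint_space K S)"
  unfolding filt_eq by (rule sets_image_in_sets[OF refl measurable_obs])

lemma obs_measurable_filt: "obs n \<in> filt K S n \<rightarrow>\<^sub>M obs_space n"
  unfolding filt_eq
  by (rule measurable_vimage_algebra1) (use measurable_space[OF measurable_obs] in auto)

lemma filt_mono: "sets (filt K S n) \<subseteq> sets (filt K S (Suc n))"
proof -
  define r where "r y = (\<lambda>k\<in>{1..K}. restrict (y k) {1..n})" for y :: "nat \<Rightarrow> nat \<Rightarrow> 'x"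
  have "r \<in> obs_space (Suc n) \<rightarrow>\<^sub>M obs_space n"
    unfolding r_def obs_space_def
  proof (rule measurable_restrict)
    fix k assume k: "k \<in> {1..K}"
    show "(\<lambda>y. restrict (y k) {1..n})
        \<in> PiM {1..K} (\<lambda>k. PiM {1..Suc n} (\<lambda>_. S k)) \<rightarrow>\<^sub>M PiM {1..n} (\<lambda>_. S k)"
      by (rule measurable_compose[OF measurable_component_singleton[OF k] measurable_restrict_subset])
        auto
  qed
  then have "(\<lambda>\<omega>. r (obs (Suc n) \<omega>)) \<in> filt K S (Suc n) \<rightarrow>\<^sub>M obs_space n"
    by (rule measurable_compose[OF obs_measurable_filt])
  moreover have "(\<lambda>\<omega>. r (obs (Suc n) \<omega>)) = obs n"
    by (intro ext) (auto simp: r_def obs_def)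
  ultimately show ?thesis
    unfolding filt_eq[of n] by (intro sets_image_in_sets) (simp_all add: space_filt)
qed

lemma prob_space_obs_law: "prob_space (obs_law X n)"
  unfolding obs_law_def by (rule prob_space_PiM) (auto simp: prob_space_marg)

lemma distr_obs_joint_law: "distr (joint_law K P0 P1 X) (obs_space n) (obs n) = obs_law X n"
proof -
  let ?P = "\<lambda>k. if k \<in> X then P1 k else P0 k"
  let ?M = "\<lambda>k. if k \<in> X then marg1 k n else marg0 k n"
  have "distr (joint_law K P0 P1 X) (obs_space n) (obs n) =
      distr (PiM {1..K} ?P) (PiM {1..K} ?M) (compose {1..K} (\<lambda>x. restrict x {1..n}))"
    unfolding joint_law_def obs_space_def
    by (intro distr_cong sets_PiM_cong) (auto simp: obs_def compose_def marg_def)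
  also have "\<dots> = PiM {1..K} (\<lambda>k. distr (?P k) (?M k) (\<lambda>x. restrict x {1..n}))"
    using laws prob_space_marg measurable_restrict_seqsp
    by (intro distr_PiM_finite_prob_space') (auto simp: marg_def cong: measurable_cong_sets)
  also have "\<dots> = obs_law X n"
    unfolding obs_law_def by (intro PiM_cong) (auto simp: marg_def intro!: distr_cong)
  finally show ?thesis .
qed

lemma obs_law_density:
  assumes "X \<subseteq> {1..K}"
  shows "obs_law X n = density (PiM {1..K} (\<lambda>k. marg0 k n)) (\<lambda>y. \<Prod>k\<in>X. lr k n (y k))"
proof -
  let ?g = "\<lambda>k. if k \<in> X then lr k n else (\<lambda>_. 1)"
  have "obs_law X n = PiM {1..K} (\<lambda>k. density (marg0 k n) (?g k))"
    unfolding obs_law_def by (intro PiM_cong) (auto simp: density_lr density_1)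
  also have "\<dots> = density (PiM {1..K} (\<lambda>k. marg0 k n)) (\<lambda>y. \<Prod>k\<in>{1..K}. ?g k (y k))"
    by (intro PiM_density) (auto simp: prob_space_marg density_lr density_1)
  also have "(\<lambda>y. \<Prod>k\<in>{1..K}. ?g k (y k)) = (\<lambda>y. \<Prod>k\<in>X. lr k n (y k))"
  proof
    fix y
    have "(\<Prod>k\<in>{1..K}. ?g k (y k)) = (\<Prod>k\<in>{1..K}. if k \<in> X then lr k n (y k) else 1)"
      by (intro prod.cong) auto
    also have "\<dots> = (\<Prod>k\<in>{1..K} \<inter> X. lr k n (y k))"
      by (rule prod.inter_restrict[symmetric]) simp
    also have "{1..K} \<inter> X = X"
      using assms by auto
    finally show "(\<Prod>k\<in>{1..K}. ?g k (y k)) = (\<Prod>k\<in>X. lr k n (y k))" .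
  qed
  finally show ?thesis .
qed

lemma lr_component_measurable:
  assumes "k \<in> {1..K}" and "sets M = sets (obs_space n)"
  shows "(\<lambda>y. lr k n (y k)) \<in> borel_measurable M"
proof -
  have "lr k n \<in> borel_measurable (PiM {1..n} (\<lambda>_. S k))"
    using borel_measurable_RN_deriv[of "marg0 k n" "marg1 k n"]
    by (simp add: marg_def cong: measurable_cong_sets)
  then show ?thesis
    using assms unfolding measurable_cong_sets[OF assms(2) refl] obs_space_def
    by (intro measurable_compose[OF measurable_component_singleton]) auto
qed

lemma obs_llr_measurable:
  assumes "A \<subseteq> {1..K}" "C \<subseteq> {1..K}"
  shows "obs_llr A C n \<in> borel_measurable (obs_space n)"
  unfolding obs_llr_def using assms
  by (intro borel_measurable_diff borel_measurable_sum borel_measurable_ln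
        borel_measurable_enn2real lr_component_measurable) auto

lemma obs_law_change_of_measure:
  assumes A: "A \<subseteq> {1..K}" and C: "C \<subseteq> {1..K}"
    and H: "H \<in> sets (obs_space n)" and llr_less: "\<And>y. y \<in> H \<Longrightarrow> obs_llr A C n y < c"
  shows "measure (obs_law A n) H \<le> exp c * measure (obs_law C n) H"
proof -
  let ?Q = "PiM {1..K} (\<lambda>k. marg0 k n)"
  have sets_Q: "sets ?Q = sets (obs_space n)"
    unfolding obs_space_def by (intro sets_PiM_cong) (auto simp: marg_def)
  have "AE y in ?Q. \<forall>k\<in>{1..K}. lr k n (y k) \<noteq> 0 \<and> lr k n (y k) \<noteq> \<infinity>"
    by (intro AE_finite_allI AE_PiM_component[where P="\<lambda>x. lr _ n x \<noteq> 0 \<and> lr _ n x \<noteq> \<infinity>"])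
       (use AE_lr_pos_finite in \<open>auto simp: prob_space_marg\<close>)
  then have AE_le: "AE y in ?Q. (\<Prod>k\<in>A. lr k n (y k)) * indicator H y
      \<le> ennreal (exp c) * ((\<Prod>k\<in>C. lr k n (y k)) * indicator H y)"
  proof eventually_elim
    case (elim y)
    show ?case
    proof (cases "y \<in> H")
      case True
      then have "(\<Prod>k\<in>A. lr k n (y k)) \<le> ennreal (exp c) * (\<Prod>k\<in>C. lr k n (y k))"
        using A C elim llr_less[OF True] finite_subset[OF A] finite_subset[OF C]
        by (intro ennreal_prod_le_exp_mult_prod) (auto simp: obs_llr_def)
      then show ?thesis
        using True by simp
    qed simp
  qed
  have density_measurable: "(\<lambda>y. \<Prod>k\<in>X. lr k n (y k)) \<in> borel_measurable ?Q" if "X \<subseteq> {1..K}" for X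
    using that sets_Q by (intro borel_measurable_prod_ennreal lr_component_measurable) auto
  have H_Q: "H \<in> sets ?Q"
    using H sets_Q by simp
  have "emeasure (obs_law A n) H = (\<integral>\<^sup>+y. (\<Prod>k\<in>A. lr k n (y k)) * indicator H y \<partial>?Q)"
    unfolding obs_law_density[OF A] by (rule emeasure_density[OF density_measurable[OF A] H_Q])
  also have "\<dots> \<le> (\<integral>\<^sup>+y. ennreal (exp c) * ((\<Prod>k\<in>C. lr k n (y k)) * indicator H y) \<partial>?Q)"
    by (rule nn_integral_mono_AE[OF AE_le])
  also have "\<dots> = ennreal (exp c) * (\<integral>\<^sup>+y. (\<Prod>k\<in>C. lr k n (y k)) * indicator H y \<partial>?Q)"
    by (intro nn_integral_cmult borel_measurable_times_ennreal density_measurable[OF C]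
        borel_measurable_indicator H_Q)
  also have "\<dots> = ennreal (exp c) * emeasure (obs_law C n) H"
    unfolding obs_law_density[OF C] emeasure_density[OF density_measurable[OF C] H_Q] ..
  finally have "emeasure (obs_law A n) H \<le> ennreal (exp c) * emeasure (obs_law C n) H" .
  then show ?thesis
    using finite_measure.emeasure_eq_measure[OF prob_space.finite_measure[OF prob_space_obs_law]]
    by (simp add: ennreal_mult[symmetric] ennreal_le_iff)
qed

lemma joint_llr_eq_obs_llr:
  assumes "A \<subseteq> {1..K}" "C \<subseteq> {1..K}"
  shows "joint_llr A C n \<omega> = obs_llr A C n (obs n \<omega>)"
  using assms unfolding joint_llr_def obs_llr_def llr_def
  by (intro arg_cong2[where f="(-)"] sum.cong) (auto simp: obs_def subset_eq)

lemma joint_llr_measurable_filt: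
  assumes "A \<subseteq> {1..K}" "C \<subseteq> {1..K}"
  shows "joint_llr A C n \<in> borel_measurable (filt K S n)"
proof -
  have "joint_llr A C n = (\<lambda>\<omega>. obs_llr A C n (obs n \<omega>))"
    by (simp add: fun_eq_iff joint_llr_eq_obs_llr[OF assms])
  then show ?thesis
    using measurable_compose[OF obs_measurable_filt obs_llr_measurable[OF assms]] by simp
qed

lemma joint_law_change_of_measure:
  assumes A: "A \<subseteq> {1..K}" and C: "C \<subseteq> {1..K}"
    and G: "G \<in> sets (filt K S n)" and llr_less: "\<And>\<omega>. \<omega> \<in> G \<Longrightarrow> joint_llr A C n \<omega> < c"
  shows "measure (joint_law K P0 P1 A) G \<le> exp c * measure (joint_law K P0 P1 C) G"
proof -
  obtain H0 where H0: "H0 \<in> sets (obs_space n)"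
    and G_eq: "G = obs n -` H0 \<inter> space (joint_space K S)"
    using G measurable_space[OF measurable_obs]
    unfolding filt_eq by (subst (asm) sets_vimage_algebra2) auto
  define H where "H = H0 \<inter> {y\<in>space (obs_space n). obs_llr A C n y < c}"
  have H: "H \<in> sets (obs_space n)"
    unfolding H_def using H0 obs_llr_measurable[OF A C] by measurable
  have G_H: "G = obs n -` H \<inter> space (joint_space K S)"
    using llr_less measurable_space[OF measurable_obs]
    unfolding G_eq H_def by (auto simp: joint_llr_eq_obs_llr[OF A C])
  have "measure (joint_law K P0 P1 X) G = measure (obs_law X n) H" for X
  proof -
    have "obs n \<in> joint_law K P0 P1 X \<rightarrow>\<^sub>M obs_space n"
      using measurable_obs by (simp add: measurable_cong_sets[OF sets_joint_law refl])
    then have "measure (distr (joint_law K P0 P1 X) (obs_space n) (obs n)) H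
        = measure (joint_law K P0 P1 X) (obs n -` H \<inter> space (joint_law K P0 P1 X))"
      using H by (rule measure_distr)
    then show ?thesis
      by (simp only: distr_obs_joint_law space_joint_law G_H[symmetric])
  qed
  moreover have "measure (obs_law A n) H \<le> exp c * measure (obs_law C n) H"
    using A C H by (rule obs_law_change_of_measure) (simp add: H_def)
  ultimately show ?thesis
    by simp
qed

lemma llr_filtration_joint_law:
  assumes "A \<subseteq> {1..K}" "C \<subseteq> {1..K}"
  shows "llr_filtration (joint_law K P0 P1 A) (joint_law K P0 P1 C) (filt K S) (joint_llr A C)"
proof (rule llr_filtration.intro)
  show "prob_space (joint_law K P0 P1 A)" "prob_space (joint_law K P0 P1 C)"
    by (fact prob_space_joint_law)+
  show "sets (joint_law K P0 P1 C) = sets (joint_law K P0 P1 A)"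
    by (simp add: sets_joint_law)
  show "space (filt K S n) = space (joint_law K P0 P1 A)" for n
    by (simp add: space_filt space_joint_law)
  show "sets (filt K S n) \<subseteq> sets (joint_law K P0 P1 A)" for n
    using sets_filt_subset by (simp add: sets_joint_law)
  show "joint_llr A C n \<in> borel_measurable (filt K S n)" for n
    using assms by (rule joint_llr_measurable_filt)
  show "measure (joint_law K P0 P1 A) G \<le> exp c * measure (joint_law K P0 P1 C) G"
    if "G \<in> sets (filt K S n)" "\<And>\<omega>. \<omega> \<in> G \<Longrightarrow> joint_llr A C n \<omega> < c" for n c G
    using assms that by (rule joint_law_change_of_measure)
qed

lemma decided_at_procedure:
  assumes "is_procedure K S T D" "k \<in> {1..K}"
  shows "decided_at (filt K S) (T k) (\<lambda>\<omega>. D k \<omega> = s)"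
proof -
  have "{\<omega>\<in>space (joint_space K S). T k \<omega> \<le> enat n} \<in> sets (filt K S n)"
    "{\<omega>\<in>space (joint_space K S). D k \<omega> \<and> T k \<omega> \<le> enat n} \<in> sets (filt K S n)" for n
    using assms by (auto simp: is_procedure_def)
  then have "decided_at (filt K S) (T k) (D k)"
    unfolding decided_at_def space_filt
    using eq_enat_in_filtration[where F="filt K S" and P="\<lambda>_. True", OF filt_mono]
      eq_enat_in_filtration[where F="filt K S" and P="D k", OF filt_mono]
    by simp
  then show ?thesis
    using decided_at_Not by (cases s) simp_all
qed

lemma sets_decision:
  assumes "is_procedure K S T D" "k \<in> {1..K}"
  shows "{\<omega>\<in>space (joint_law K P0 P1 X). D k \<omega> = s} \<in> sets (joint_law K P0 P1 X)"
proof -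
  have "{\<omega>\<in>space (joint_law K P0 P1 X). D k \<omega>} \<in> sets (joint_law K P0 P1 X)"
    using assms by (simp add: is_procedure_def sets_joint_law space_joint_law)
  then show ?thesis
    by (cases s) (simp_all add: sets.sets_Collect_neg)
qed

lemma prob_wrong_decision_le:
  assumes TD: "(T, D) \<in> Delta K S P0 P1 \<alpha> \<beta> Cls" and X: "X \<in> Cls" "Cls \<subseteq> Pow {1..K}"
    and k: "k \<in> {1..K}"
  shows "measure (joint_law K P0 P1 X) {\<omega>\<in>space (joint_law K P0 P1 X). D k \<omega> \<noteq> (k \<in> X)}
    \<le> (if k \<in> X then \<beta> else \<alpha>)"
proof -
  interpret prob_space "joint_law K P0 P1 X"
    by (rule prob_space_joint_law)
  have P: "is_procedure K S T D" and FWE: "FWE1 K P0 P1 X D \<le> \<alpha>" "FWE2 K P0 P1 X D \<le> \<beta>"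
    using TD X by (auto simp: Delta_def)
  have D_sets: "{\<omega>\<in>space (joint_law K P0 P1 X). D j \<omega>} \<in> events" if "j \<in> {1..K}" for j
    using sets_decision[OF P that, of _ True] by simp
  have XK: "X \<subseteq> {1..K}"
    using X by auto
  then have "finite X"
    by (rule finite_subset) simp
  show ?thesis
  proof (cases "k \<in> X")
    case True
    have "prob {\<omega>\<in>space (joint_law K P0 P1 X). \<not> D k \<omega>} \<le> FWE2 K P0 P1 X D"
      unfolding FWE2_def using True XK D_sets \<open>finite X\<close>
      by (intro finite_measure_mono sets.sets_Collect_finite_Ex sets.sets_Collect_neg) auto
    then show ?thesis
      using True FWE by simp
  next
    case False
    have "prob {\<omega>\<in>space (joint_law K P0 P1 X). D k \<omega>} \<le> FWE1 K P0 P1 X D"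
      unfolding FWE1_def using False k D_sets
      by (intro finite_measure_mono sets.sets_Collect_finite_Ex) auto
    then show ?thesis
      using False FWE by simp
  qed
qed

end

locale multistream_rates = multistream +
  fixes I J :: "nat \<Rightarrow> real"
  assumes IJpos: "\<And>k. k \<in> {1..K} \<Longrightarrow> 0 < I k \<and> 0 < J k"
    and rate1: "\<And>k. k \<in> {1..K} \<Longrightarrow> AE x in P1 k.
                  limsup (\<lambda>n. ereal (llr (P0 k) (P1 k) (S k) n x / real n)) \<le> ereal (I k)"
    and rate0: "\<And>k. k \<in> {1..K} \<Longrightarrow> AE x in P0 k.
                  limsup (\<lambda>n. ereal (- llr (P0 k) (P1 k) (S k) n x / real n)) \<le> ereal (J k)"
begin

lemma joint_llr_rate:
  assumes A: "A \<subseteq> {1..K}" and C: "C \<subseteq> {1..K}"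
  shows "AE \<omega> in joint_law K P0 P1 A.
    limsup (\<lambda>n. ereal (joint_llr A C n \<omega> / real n)) \<le> ereal (IAC I J A C)"
proof -
  let ?u = "\<lambda>\<omega> k n. ereal (llr (P0 k) (P1 k) (S k) n (\<omega> k) / real n)"
  let ?v = "\<lambda>\<omega> k n. ereal (- llr (P0 k) (P1 k) (S k) n (\<omega> k) / real n)"
  have "AE \<omega> in joint_law K P0 P1 A. \<forall>k\<in>{1..K}.
      (k \<in> A \<longrightarrow> limsup (?u \<omega> k) \<le> ereal (I k)) \<and> (k \<notin> A \<longrightarrow> limsup (?v \<omega> k) \<le> ereal (J k))"
  proof (rule AE_finite_allI)
    fix k assume k: "k \<in> {1..K}"
    let ?R = "\<lambda>x. (k \<in> A \<longrightarrow> limsup (?u (\<lambda>_. x) k) \<le> ereal (I k)) \<and>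
        (k \<notin> A \<longrightarrow> limsup (?v (\<lambda>_. x) k) \<le> ereal (J k))"
    have "AE x in (if k \<in> A then P1 k else P0 k). ?R x"
      using rate1[OF k] rate0[OF k] by (cases "k \<in> A") auto
    then show "AE \<omega> in joint_law K P0 P1 A. ?R (\<omega> k)"
      unfolding joint_law_def by (intro AE_PiM_component[where P="?R"] k) (use laws in auto)
  qed simp
  then show ?thesis
  proof eventually_elim
    case (elim \<omega>)
    have "limsup (\<lambda>n. ereal (joint_llr A C n \<omega> / real n))
        = limsup (\<lambda>n. (\<Sum>k\<in>A - C. ?u \<omega> k n) + (\<Sum>k\<in>C - A. ?v \<omega> k n))"
      by (simp add: joint_llr_def diff_divide_distrib sum_divide_distrib sum_negf)
    also have "\<dots> \<le> limsup (\<lambda>n. \<Sum>k\<in>A - C. ?u \<omega> k n) + limsup (\<lambda>n. \<Sum>k\<in>C - A. ?v \<omega> k n)"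
      by (rule ereal_limsup_add_mono)
    also have "\<dots> \<le> (\<Sum>k\<in>A - C. limsup (?u \<omega> k)) + (\<Sum>k\<in>C - A. limsup (?v \<omega> k))"
      using finite_subset[OF A] finite_subset[OF C] by (intro add_mono limsup_sum_le) auto
    also have "\<dots> \<le> (\<Sum>k\<in>A - C. ereal (I k)) + (\<Sum>k\<in>C - A. ereal (J k))"
      using elim A C by (intro add_mono sum_mono) auto
    also have "\<dots> = ereal (IAC I J A C)"
      by (simp add: IAC_def)
    finally show ?case .
  qed
qed

lemma LL_ge_alternative:
  assumes Cls: "Cls \<subseteq> Pow {1..K}" and A: "A \<in> Cls" and C: "C \<in> Cls"
    and k: "k \<in> {1..K}" "(k \<in> A) \<noteq> (k \<in> C)" and \<epsilon>: "0 < \<epsilon>"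
  shows "\<exists>\<delta>>0. \<forall>\<alpha> \<beta>. 0 < \<alpha> \<and> \<alpha> < \<delta> \<and> 0 < \<beta> \<and> \<beta> < \<delta> \<longrightarrow>
    ennreal ((1 - \<epsilon>) * \<bar>ln (if k \<in> A then \<alpha> else \<beta>)\<bar> / IAC I J A C) \<le> LL K S P0 P1 k A \<alpha> \<beta> Cls"
proof -
  let ?PA = "joint_law K P0 P1 A" and ?PC = "joint_law K P0 P1 C"
  have AK: "A \<subseteq> {1..K}" and CK: "C \<subseteq> {1..K}"
    using Cls A C by auto
  interpret llr_filtration ?PA ?PC "filt K S" "joint_llr A C"
    using AK CK by (rule llr_filtration_joint_law)
  have "0 < IAC I J A C"
    using AK CK k IJpos by (intro IAC_pos[where k=k]) (auto intro: finite_subset)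
  then obtain \<delta> where "0 < \<delta>" and \<delta>: "\<And>T E b. decided_at (filt K S) T E \<Longrightarrow>
      {\<omega>\<in>space ?PA. E \<omega>} \<in> sets ?PA \<Longrightarrow> measure ?PA {\<omega>\<in>space ?PA. \<not> E \<omega>} < \<delta> \<Longrightarrow>
      0 < b \<Longrightarrow> b < \<delta> \<Longrightarrow> measure ?PC {\<omega>\<in>space ?PC. E \<omega>} \<le> b \<Longrightarrow>
      ennreal ((1 - \<epsilon>) * \<bar>ln b\<bar> / IAC I J A C) \<le> (\<integral>\<^sup>+\<omega>. ennreal_of_enat (T \<omega>) \<partial>?PA)"
    using expected_stopping_time_ge[OF joint_llr_rate[OF AK CK] _ \<epsilon>] by blast
  show ?thesis
  proof (intro exI[of _ \<delta>] conjI allI impI \<open>0 < \<delta>\<close>)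
    fix \<alpha> \<beta> :: real assume \<alpha>\<beta>: "0 < \<alpha> \<and> \<alpha> < \<delta> \<and> 0 < \<beta> \<and> \<beta> < \<delta>"
    let ?b = "if k \<in> A then \<alpha> else \<beta>"
    show "ennreal ((1 - \<epsilon>) * \<bar>ln ?b\<bar> / IAC I J A C) \<le> LL K S P0 P1 k A \<alpha> \<beta> Cls"
      unfolding LL_def
    proof (rule INF_greatest, clarify)
      fix T D assume TD: "(T, D) \<in> Delta K S P0 P1 \<alpha> \<beta> Cls"
      then have P: "is_procedure K S T D"
        by (simp add: Delta_def)
      (* the decision on stream k is correct under P_A and wrong under P_C *)
      let ?E = "\<lambda>\<omega>. D k \<omega> = (k \<in> A)"
      note decided_at_procedure[OF P k(1), where s="k \<in> A"]
        sets_decision[OF P k(1), where X=A and s="k \<in> A"]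
      moreover have "measure ?PA {\<omega>\<in>space ?PA. \<not> ?E \<omega>} < \<delta>"
        using prob_wrong_decision_le[OF TD A Cls k(1)] \<alpha>\<beta> by (cases "k \<in> A") auto
      moreover have "0 < ?b" "?b < \<delta>"
        using \<alpha>\<beta> by simp_all
      moreover have "measure ?PC {\<omega>\<in>space ?PC. ?E \<omega>} \<le> ?b"
        using prob_wrong_decision_le[OF TD C Cls k(1)] k(2) by (cases "k \<in> A") simp_all
      ultimately have "ennreal ((1 - \<epsilon>) * \<bar>ln ?b\<bar> / IAC I J A C)
          \<le> (\<integral>\<^sup>+\<omega>. ennreal_of_enat (T k \<omega>) \<partial>?PA)"
        by (rule \<delta>)
      then show "ennreal ((1 - \<epsilon>) * \<bar>ln ?b\<bar> / IAC I J A C)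
          \<le> (\<integral>\<^sup>+\<omega>. ennreal_of_enat (fst (T, D) k \<omega>) \<partial>?PA)"
        by simp
    qed
  qed
qed

lemma LL_ge_Min:
  assumes Cls: "Cls \<subseteq> Pow {1..K}" and A: "A \<in> Cls"
    and k: "k \<in> {1..K}" "\<exists>C\<in>Cls. (k \<in> C) \<noteq> (k \<in> A)" and \<epsilon>: "0 < \<epsilon>"
  shows "\<exists>\<delta>>0. \<forall>\<alpha> \<beta>. 0 < \<alpha> \<and> \<alpha> < \<delta> \<and> 0 < \<beta> \<and> \<beta> < \<delta> \<longrightarrow>
    ennreal ((1 - \<epsilon>) * \<bar>ln (if k \<in> A then \<alpha> else \<beta>)\<bar>
        / Min {IAC I J A C | C. C \<in> Cls \<and> (k \<in> C) \<noteq> (k \<in> A)})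
      \<le> LL K S P0 P1 k A \<alpha> \<beta> Cls"
proof -
  let ?rates = "{IAC I J A C | C. C \<in> Cls \<and> (k \<in> C) \<noteq> (k \<in> A)}"
  have "finite Cls"
    using Cls by (rule finite_subset) simp
  then have "Min ?rates \<in> ?rates"
    using k(2) by (intro Min_in) auto
  then obtain C where "C \<in> Cls" "(k \<in> C) \<noteq> (k \<in> A)" and "Min ?rates = IAC I J A C"
    by auto
  then show ?thesis
    using LL_ge_alternative[OF Cls A \<open>C \<in> Cls\<close> k(1) _ \<epsilon>] by simp
qed

end

theorem lemma5p1:
  fixes K :: nat and S :: "nat \<Rightarrow> 'x measure"
    and P0 P1 :: "nat \<Rightarrow> (nat \<Rightarrow> 'x) measure"
    and I J :: "nat \<Rightarrow> real" and Cls :: "nat set set" and A :: "nat set" and i j :: nat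
  assumes K: "1 \<le> K"
    and laws: "\<And>k. k \<in> {1..K} \<Longrightarrow> prob_space (P0 k) \<and> prob_space (P1 k) \<and>
                  sets (P0 k) = sets (seqsp (S k)) \<and> sets (P1 k) = sets (seqsp (S k))"
    and mac: "\<And>k n. k \<in> {1..K} \<Longrightarrow>
                  absolutely_continuous (marg (P0 k) (S k) n) (marg (P1 k) (S k) n) \<and>
                  absolutely_continuous (marg (P1 k) (S k) n) (marg (P0 k) (S k) n)"
    and IJpos: "\<And>k. k \<in> {1..K} \<Longrightarrow> 0 < I k \<and> 0 < J k"
    and rate1: "\<And>k. k \<in> {1..K} \<Longrightarrow> AE x in P1 k.
                  limsup (\<lambda>n. ereal (llr (P0 k) (P1 k) (S k) n x / real n)) \<le> ereal (I k)"
    and rate0: "\<And>k. k \<in> {1..K} \<Longrightarrow> AE x in P0 k.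
                  limsup (\<lambda>n. ereal (- llr (P0 k) (P1 k) (S k) n x / real n)) \<le> ereal (J k)"
    and Pi_sub: "Cls \<subseteq> Pow {1..K}"
    and Pi_cover: "\<And>k. k \<in> {1..K} \<Longrightarrow> (\<exists>B\<in>Cls. k \<in> B) \<and> (\<exists>B\<in>Cls. k \<notin> B)"
    and A: "A \<in> Cls" and i: "i \<in> A" and j: "j \<in> {1..K}" "j \<notin> A"
  shows "(\<forall>\<epsilon>>0. \<exists>\<delta>>0. \<forall>\<alpha> \<beta>. 0 < \<alpha> \<and> \<alpha> < \<delta> \<and> 0 < \<beta> \<and> \<beta> < \<delta> \<longrightarrow>
            ennreal ((1 - \<epsilon>) * \<bar>ln \<alpha>\<bar> / Min {IAC I J A C | C. C \<in> Cls \<and> i \<notin> C})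
              \<le> LL K S P0 P1 i A \<alpha> \<beta> Cls)
       \<and> (\<forall>\<epsilon>>0. \<exists>\<delta>>0. \<forall>\<alpha> \<beta>. 0 < \<alpha> \<and> \<alpha> < \<delta> \<and> 0 < \<beta> \<and> \<beta> < \<delta> \<longrightarrow>
            ennreal ((1 - \<epsilon>) * \<bar>ln \<beta>\<bar> / Min {IAC I J A C | C. C \<in> Cls \<and> j \<in> C})
              \<le> LL K S P0 P1 j A \<alpha> \<beta> Cls)"
proof -
  interpret multistream_rates K S P0 P1 I J
    using laws mac IJpos rate1 rate0 by unfold_locales
  have iK: "i \<in> {1..K}"
    using Pi_sub A i by blast
  have alternatives:
    "{IAC I J A C | C. C \<in> Cls \<and> (i \<in> C) \<noteq> (i \<in> A)} = {IAC I J A C | C. C \<in> Cls \<and> i \<notin> C}"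
    "{IAC I J A C | C. C \<in> Cls \<and> (j \<in> C) \<noteq> (j \<in> A)} = {IAC I J A C | C. C \<in> Cls \<and> j \<in> C}"
    using i j by auto
  have alt_i: "\<exists>C\<in>Cls. (i \<in> C) \<noteq> (i \<in> A)" and alt_j: "\<exists>C\<in>Cls. (j \<in> C) \<noteq> (j \<in> A)"
    using Pi_cover[OF iK] Pi_cover[OF j(1)] i j by auto
  show ?thesis
    using LL_ge_Min[OF Pi_sub A iK alt_i] LL_ge_Min[OF Pi_sub A j(1) alt_j] i j(2)
    unfolding alternatives by simp
qed

end
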